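(* Let $m\ge1$ be an integer and for each $s\in(0,m)$ let $\sigma_s$ be a Borel probability measure on $\mathbb S^{N-1}$. Then for every $\beta\in(0,1)$ and every $u\in C^\beta_c(\mathbb R^N)$ (compactly supported $\beta$-Hölder continuous function), $$\lim_{s\to0^+}L_{m,s}u(x)=u(x)\qquad\text{for all }x\in\mathbb R^N.$$
   Context: $\nu_s(U)=\int_0^\infty\int_{\mathbb S^{N-1}}\chi_U(r\theta)r^{-1-2s}\sigma_s(d\theta)\,dr$; $M_{s,\sigma}(e)=\int|e\cdot\theta|^{2s}\sigma(d\theta)$; $e_s$ is a maximum point of $M_{s,\sigma_s}$; for an integer $m>s$, $c_{m,s}>0$ is defined by $\frac2{c_{m,s}}=2^m\int(1-\cos(e_s\cdot y))^m\nu_s(dy)$; $\delta_mu(x,y)=\sum_{k=-m}^m(-1)^k\binom{2m}{m-k}u(x+ky)$; $L_{m,s}u(x)=\frac{c_{m,s}}2\int_{\mathbb R^N}\delta_mu(x,y)\,\nu_s(dy)$. *)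

theory Defs
  imports "HOL-Probability.Probability"
begin

text \<open>The L\'evy measure nu_s on R^N: the push-forward of
  (r^(-1-2s) dr on (0,inf)) x sigma_s under (r,theta) |-> r theta, so that
  nu_s(U) = int_0^inf int_S chi_U(r theta) r^(-1-2s) sigma_s(d theta) dr.\<close>
definition nu_meas :: "'a::euclidean_space measure \<Rightarrow> real \<Rightarrow> 'a measure" where
  "nu_meas \<sigma> s =
     distr ((density lborel (\<lambda>r::real. indicator {0<..} r * ennreal (r powr (-1 - 2 * s)))) \<Otimes>\<^sub>M \<sigma>)
           borel (\<lambda>(r, \<theta>). r *\<^sub>R \<theta>)"

definition M_fun :: "real \<Rightarrow> 'a::euclidean_space measure \<Rightarrow> 'a \<Rightarrow> real" where
  "M_fun s \<sigma> e = (\<integral>\<theta>. \<bar>e \<bullet> \<theta>\<bar> powr (2 * s) \<partial>\<sigma>)"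

definition c_const :: "nat \<Rightarrow> real \<Rightarrow> 'a::euclidean_space measure \<Rightarrow> 'a \<Rightarrow> real" where
  "c_const m s \<sigma> e = 2 / (2 ^ m * (\<integral>y. (1 - cos (e \<bullet> y)) ^ m \<partial>(nu_meas \<sigma> s)))"

definition delta_m :: "nat \<Rightarrow> ('a::euclidean_space \<Rightarrow> real) \<Rightarrow> 'a \<Rightarrow> 'a \<Rightarrow> real" where
  "delta_m m u x y = (\<Sum>k\<in>{- int m..int m}.
       (-1::real) ^ nat \<bar>k\<bar> * real ((2 * m) choose nat (int m - k)) * u (x + real_of_int k *\<^sub>R y))"

definition L_op :: "nat \<Rightarrow> real \<Rightarrow> 'a::euclidean_space measure \<Rightarrow> 'a \<Rightarrow> ('a \<Rightarrow> real) \<Rightarrow> 'a \<Rightarrow> real" where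
  "L_op m s \<sigma> e u x = c_const m s \<sigma> e / 2 * (\<integral>y. delta_m m u x y \<partial>(nu_meas \<sigma> s))"

end

theory Submission
  imports Defs
begin

(* Write delta_m u(x,y) = sum_j d_j u(x + (m - j) y) with d_j = (-1)^(m+j) binom(2m, j), so that
   sum_j d_j = 0 and sum_j d_j cos((m - j) t) = 2^m (1 - cos t)^m.  In polar coordinates both the
   integral of delta_m u(x, .) against nu_s and the normalising integral blow up like 1/(2s), and
   only through the tail |y| >= 1, whose nu_s-mass is 1/(2s).  Far out, compact support of u kills
   every term of delta_m u except binom(2m, m) u(x); near 0 the Hoelder bound
   |delta_m u| <= C |y|^beta keeps the integral bounded once 2s < beta.  The normalising integral
   factors as M_{s,sigma}(e) times I(s) = int_0^inf r^(-1-2s) (1 - cos r)^m dr, and 2s 2^m I(s)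
   tends to binom(2m, m), the mean value of 2^m (1 - cos r)^m.  Finally M_{s,sigma_s}(e_s) tends
   to 1: the maximum over the sphere dominates the average of |e . theta|^(2s) over e in the unit
   ball, and that average tends to 1 uniformly in theta. *)

section \<open>Polar coordinates for the Levy measure\<close>

definition sphere_prob :: "'a::euclidean_space measure \<Rightarrow> bool" where
  "sphere_prob \<sigma> \<longleftrightarrow> sets \<sigma> = sets borel \<and> prob_space \<sigma> \<and> emeasure \<sigma> (sphere 0 1) = 1"

definition polar_weight :: "real \<Rightarrow> real \<Rightarrow> ennreal" where
  "polar_weight s r = indicator {0<..} r * ennreal (r powr (-1 - 2 * s))"

lemma polar_weight_measurable [measurable]: "polar_weight s \<in> borel_measurable borel"
  unfolding polar_weight_def by measurable

lemma sets_nu_meas: "sets (nu_meas \<sigma> s) = sets (borel :: 'a::euclidean_space measure)"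
  unfolding nu_meas_def by simp

lemma nn_integral_nu_meas:
  fixes \<sigma> :: "'a::euclidean_space measure" and f :: "'a \<Rightarrow> ennreal"
  assumes sets: "sets \<sigma> = sets borel" and "sigma_finite_measure \<sigma>"
    and f [measurable]: "f \<in> borel_measurable borel"
  shows "(\<integral>\<^sup>+y. f y \<partial>nu_meas \<sigma> s) = (\<integral>\<^sup>+\<theta>. (\<integral>\<^sup>+r. polar_weight s r * f (r *\<^sub>R \<theta>) \<partial>lborel) \<partial>\<sigma>)"
proof -
  let ?D = "density lborel (polar_weight s)"
  interpret D: sigma_finite_measure ?D
    by (subst sigma_finite_measure.sigma_finite_iff_density_finite'[of lborel])
       (auto intro: sigma_finite_lborel simp: polar_weight_def indicator_def)
  interpret S: sigma_finite_measure \<sigma> by fact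
  interpret P: pair_sigma_finite ?D \<sigma> by unfold_locales
  have "sets (?D \<Otimes>\<^sub>M \<sigma>) = sets (borel \<Otimes>\<^sub>M borel)"
    by (intro sets_pair_measure_cong) (auto simp: sets)
  then have polar [measurable]: "(\<lambda>(r, \<theta>). r *\<^sub>R \<theta>) \<in> measurable (?D \<Otimes>\<^sub>M \<sigma>) (borel :: 'a measure)"
    by (subst measurable_cong_sets[OF _ refl]) measurable
  have "(\<integral>\<^sup>+y. f y \<partial>nu_meas \<sigma> s) = (\<integral>\<^sup>+p. f (case p of (r, \<theta>) \<Rightarrow> r *\<^sub>R \<theta>) \<partial>(?D \<Otimes>\<^sub>M \<sigma>))"
    unfolding nu_meas_def polar_weight_def[symmetric, abs_def]
    by (rule nn_integral_distr[OF polar]) simp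
  also have "\<dots> = (\<integral>\<^sup>+\<theta>. (\<integral>\<^sup>+r. f (r *\<^sub>R \<theta>) \<partial>?D) \<partial>\<sigma>)"
    using P.nn_integral_snd[OF measurable_comp[OF polar f]] by (simp add: o_def)
  also have "\<dots> = (\<integral>\<^sup>+\<theta>. (\<integral>\<^sup>+r. polar_weight s r * f (r *\<^sub>R \<theta>) \<partial>lborel) \<partial>\<sigma>)"
    by (intro nn_integral_cong nn_integral_density) auto
  finally show ?thesis .
qed

lemma AE_sphere_prob:
  assumes "sphere_prob \<sigma>"
  shows "AE \<theta> in \<sigma>. \<theta> \<in> sphere (0::'a::euclidean_space) 1"
  using assms prob_space.AE_in_set_eq_1[of \<sigma> "sphere 0 1"] by (simp add: sphere_prob_def measure_def)

lemma nn_integral_nu_meas_radial: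
  fixes g :: "real \<Rightarrow> ennreal"
  assumes \<sigma>: "sphere_prob (\<sigma> :: 'a::euclidean_space measure)" and [measurable]: "g \<in> borel_measurable borel"
  shows "(\<integral>\<^sup>+y. g (norm y) \<partial>nu_meas \<sigma> s) = (\<integral>\<^sup>+r. polar_weight s r * g r \<partial>lborel)"
proof -
  have "(\<integral>\<^sup>+y. g (norm y) \<partial>nu_meas \<sigma> s) = (\<integral>\<^sup>+\<theta>. (\<integral>\<^sup>+r. polar_weight s r * g (norm (r *\<^sub>R \<theta>)) \<partial>lborel) \<partial>\<sigma>)"
    using \<sigma> by (intro nn_integral_nu_meas) (auto simp: sphere_prob_def prob_space_imp_sigma_finite)
  also have "\<dots> = (\<integral>\<^sup>+\<theta>. (\<integral>\<^sup>+r. polar_weight s r * g r \<partial>lborel) \<partial>\<sigma>)"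
    using AE_sphere_prob[OF \<sigma>]
    by (intro nn_integral_cong_AE) (auto elim!: eventually_mono intro!: nn_integral_cong
        simp: polar_weight_def indicator_def)
  also have "\<dots> = (\<integral>\<^sup>+r. polar_weight s r * g r \<partial>lborel)"
    using \<sigma> by (simp add: sphere_prob_def prob_space.emeasure_space_1 nn_integral_const)
  finally show ?thesis .
qed

lemma nn_integral_powr_atLeast_1:
  fixes a :: real assumes "a < -1"
  shows "(\<integral>\<^sup>+r. ennreal (r powr a) * indicator {1..} r \<partial>lborel) = ennreal (- 1 / (a + 1))"
  using nn_integral_has_integral_lebesgue'[OF _ has_integral_powr_to_inf[of a 1]] assms by simp

lemma nn_integral_powr_0_1:
  fixes a :: real assumes "a > -1"
  shows "(\<integral>\<^sup>+r. ennreal (r powr a) * indicator {0..1} r \<partial>lborel) = ennreal (1 / (a + 1))"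
  using nn_integral_has_integral_lebesgue'[OF _ has_integral_powr_from_0[of a 1]] assms by simp

lemma nn_integral_polar_weight_atLeast_1:
  assumes "s > 0"
  shows "(\<integral>\<^sup>+r. polar_weight s r * indicator {1..} r \<partial>lborel) = ennreal (1 / (2 * s))"
proof -
  have "(\<integral>\<^sup>+r. polar_weight s r * indicator {1..} r \<partial>lborel)
      = (\<integral>\<^sup>+r. ennreal (r powr (-1 - 2 * s)) * indicator {1..} r \<partial>lborel)"
    by (intro nn_integral_cong) (auto simp: polar_weight_def indicator_def)
  then show ?thesis
    using nn_integral_powr_atLeast_1[of "-1 - 2 * s"] assms by simp
qed

lemma nn_integral_polar_weight_powr_atMost_1:
  assumes "b > 2 * s"
  shows "(\<integral>\<^sup>+r. polar_weight s r * indicator {..1} r * ennreal (r powr b) \<partial>lborel) = ennreal (1 / (b - 2 * s))"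
proof -
  have "polar_weight s r * indicator {..1} r * ennreal (r powr b)
      = ennreal (r powr (b - 1 - 2 * s)) * indicator {0..1} r" for r
  proof (cases "0 < r \<and> r \<le> 1")
    case True
    then have "r powr (-1 - 2 * s) * r powr b = r powr (b - 1 - 2 * s)"
      by (simp add: powr_add[symmetric] algebra_simps)
    then show ?thesis using True by (simp add: polar_weight_def ennreal_mult'[symmetric])
  qed (auto simp: polar_weight_def indicator_def)
  then show ?thesis
    using nn_integral_powr_0_1[of "b - 1 - 2 * s"] assms by simp
qed

lemma emeasure_nu_meas_outside_ball:
  assumes "sphere_prob (\<sigma> :: 'a::euclidean_space measure)" and "s > 0"
  shows "emeasure (nu_meas \<sigma> s) {y. 1 \<le> norm y} = ennreal (1 / (2 * s))"
proof -
  have "{y::'a. 1 \<le> norm y} \<in> sets (nu_meas \<sigma> s)"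
    unfolding sets_nu_meas by measurable
  then have "emeasure (nu_meas \<sigma> s) {y. 1 \<le> norm y} = (\<integral>\<^sup>+y. indicator {y. 1 \<le> norm y} y \<partial>nu_meas \<sigma> s)"
    by (rule nn_integral_indicator[symmetric])
  also have "\<dots> = (\<integral>\<^sup>+y. indicator {1..} (norm y) \<partial>nu_meas \<sigma> s)"
    by (intro nn_integral_cong) (simp split: split_indicator)
  also have "\<dots> = ennreal (1 / (2 * s))"
    using assms by (simp add: nn_integral_nu_meas_radial nn_integral_polar_weight_atLeast_1)
  finally show ?thesis .
qed

section \<open>The coefficients of the difference operator\<close>

definition delta_coeff :: "nat \<Rightarrow> nat \<Rightarrow> real" where
  "delta_coeff m j = (-1) ^ (m + j) * real ((2 * m) choose j)"

lemma sum_delta_coeff_cis: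
  "(\<Sum>j=0..2*m. complex_of_real (delta_coeff m j) * cis ((real m - real j) * t))
     = complex_of_real ((2 - 2 * cos t) ^ m)"
proof -
  define w where "w = cis t"
  have w0: "w \<noteq> 0" by (simp add: w_def)
  have cis_w: "cis ((real m - real j) * t) = w ^ m * inverse w ^ j" for j
  proof -
    have "w ^ m * inverse w ^ j = cis (real m * t) * cis (real j * (- t))"
      by (simp only: w_def cis_inverse Complex.DeMoivre)
    then show ?thesis by (simp add: cis_mult left_diff_distrib)
  qed
  have "(\<Sum>j=0..2*m. complex_of_real (delta_coeff m j) * cis ((real m - real j) * t))
      = (-1) ^ m * w ^ m * (\<Sum>j\<le>2*m. of_nat ((2*m) choose j) * (- inverse w) ^ j * 1 ^ (2*m - j))"
    unfolding atLeast0AtMost sum_distrib_left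
    by (intro sum.cong refl) (simp add: cis_w delta_coeff_def power_add power_minus[of "inverse w"])
  also have "\<dots> = (-1) ^ m * w ^ m * (- inverse w + 1) ^ (2 * m)"
    by (subst binomial_ring) simp
  also have "(- inverse w + 1) ^ (2 * m) = ((1 - inverse w) ^ 2) ^ m"
    by (simp add: power_mult[symmetric] mult.commute)
  also have "(-1) ^ m * w ^ m * ((1 - inverse w) ^ 2) ^ m = (- (w * (1 - inverse w) ^ 2)) ^ m"
    by (simp only: power_mult_distrib[symmetric]) simp
  also have "- (w * (1 - inverse w) ^ 2) = 2 - (w + inverse w)"
    using w0 by (simp add: power2_eq_square field_simps)
  also have "w + inverse w = 2 * cos t"
    by (simp add: w_def complex_eq_iff)
  finally show ?thesis by simp
qed

lemma sum_delta_coeff_cos: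
  "(\<Sum>j=0..2*m. delta_coeff m j * cos ((real m - real j) * t)) = 2 ^ m * (1 - cos t) ^ m"
proof -
  have "(\<Sum>j=0..2*m. delta_coeff m j * cos ((real m - real j) * t))
      = Re (\<Sum>j=0..2*m. complex_of_real (delta_coeff m j) * cis ((real m - real j) * t))"
    by simp
  also have "\<dots> = (2 - 2 * cos t) ^ m"
    by (simp only: sum_delta_coeff_cis Re_complex_of_real)
  finally show ?thesis by (simp add: power_mult_distrib[symmetric])
qed

lemma sum_delta_coeff_eq_0: "m \<ge> 1 \<Longrightarrow> (\<Sum>j=0..2*m. delta_coeff m j) = 0"
  using sum_delta_coeff_cos[of m 0] by simp

lemma delta_coeff_middle: "delta_coeff m m = real ((2 * m) choose m)"
  by (simp add: delta_coeff_def)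

lemma minus_one_power_nat_abs:
  assumes "-int m \<le> k" "k \<le> int m"
  shows "(-1::real) ^ nat \<bar>k\<bar> = (-1) ^ (m + nat (int m - k))"
proof -
  have "even (nat \<bar>k\<bar>) \<longleftrightarrow> even (m + nat (int m - k))"
    using assms by (cases "k \<ge> 0") (simp_all add: even_nat_iff, presburger+)
  then show ?thesis by (simp add: minus_one_power_iff)
qed

lemma delta_m_eq_sum_delta_coeff:
  "delta_m m u x y = (\<Sum>j=0..2*m. delta_coeff m j * u (x + (real m - real j) *\<^sub>R y))"
  unfolding delta_m_def
proof (rule sum.reindex_bij_witness[where j = "\<lambda>k. nat (int m - k)" and i = "\<lambda>j. int m - int j"])
  fix k assume k: "k \<in> {- int m..int m}"
  then have "real m - real (nat (int m - k)) = real_of_int k" by auto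
  then show "delta_coeff m (nat (int m - k)) * u (x + (real m - real (nat (int m - k))) *\<^sub>R y) =
    (-1) ^ nat \<bar>k\<bar> * real (2 * m choose nat (int m - k)) * u (x + real_of_int k *\<^sub>R y)"
    using minus_one_power_nat_abs[of m k] k by (simp add: delta_coeff_def)
qed auto

section \<open>Power-weighted tails of functions with a bounded primitive\<close>

lemma tendsto_at_right_0_linear_bound:
  fixes f :: "real \<Rightarrow> real"
  assumes "\<forall>\<^sub>F s in at_right 0. \<bar>f s - a\<bar> \<le> s * K"
  shows "(f \<longlongrightarrow> a) (at_right 0)"
proof -
  have "((\<lambda>s. s * K) \<longlongrightarrow> 0) (at_right 0)"
    by (intro tendsto_mult_left_zero tendsto_ident_at)
  then have "((\<lambda>s. f s - a) \<longlongrightarrow> 0) (at_right 0)"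
    by (rule Lim_null_comparison[rotated]) (use assms in simp)
  then show ?thesis by (rule LIM_zero_cancel)
qed

lemma borel_measurable_if_has_real_derivative:
  assumes "\<And>r. (G has_real_derivative D r) (at r)"
  shows "G \<in> borel_measurable borel"
  using assms
  by (intro borel_measurable_continuous_onI continuous_at_imp_continuous_on) (auto intro: DERIV_isCont)

(* Integration by parts against the bounded primitive G of P - c.  The term p (B - G r) r^(-p-1)
   is added to make the integrand nonnegative, so that the FTC for nonnegative integrals applies. *)
lemma nn_integral_powr_tail_by_parts:
  fixes P G :: "real \<Rightarrow> real"
  assumes P_nonneg: "\<And>r. 0 \<le> P r" and [measurable]: "P \<in> borel_measurable borel"
    and G_deriv: "\<And>r. (G has_real_derivative P r - c) (at r)"
    and G_bound: "\<And>r. \<bar>G r\<bar> \<le> B" and p: "1 < p"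
  shows "(\<integral>\<^sup>+r. ennreal (P r * r powr (-p) + p * (B - G r) * r powr (-p - 1)) * indicator {1..} r \<partial>lborel)
           = ennreal (c / (p - 1) + B - G 1)"
proof -
  define F where "F r = - (c / (p - 1)) * r powr (1 - p) + (G r - B) * r powr (-p)" for r
  have [measurable]: "G \<in> borel_measurable borel"
    using G_deriv by (rule borel_measurable_if_has_real_derivative)
  have "(\<integral>\<^sup>+r. ennreal (P r * r powr (-p) + p * (B - G r) * r powr (-p - 1)) * indicator {1..} r \<partial>lborel)
      = ennreal (0 - F 1)"
  proof (rule nn_integral_FTC_atLeast)
    fix x :: real assume x: "1 \<le> x"
    show "0 \<le> P x * x powr (-p) + p * (B - G x) * x powr (-p - 1)"
      using P_nonneg[of x] G_bound[of x] p by (auto intro!: add_nonneg_nonneg mult_nonneg_nonneg)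
    have dG: "((\<lambda>r. G r - B) has_real_derivative P x - c) (at x)"
      using DERIV_diff[OF G_deriv DERIV_const] by simp
    have d1: "((\<lambda>r. r powr (1 - p)) has_real_derivative (1 - p) * x powr (1 - p - 1)) (at x)"
      using x by (intro has_real_derivative_powr) auto
    have d2: "((\<lambda>r. r powr (-p)) has_real_derivative -p * x powr (-p - 1)) (at x)"
      using x by (intro has_real_derivative_powr) auto
    have "(F has_real_derivative - (c / (p - 1)) * ((1 - p) * x powr (1 - p - 1))
             + ((G x - B) * (-p * x powr (-p - 1)) + (P x - c) * x powr (-p))) (at x)"
      unfolding F_def by (intro DERIV_add DERIV_cmult DERIV_mult' dG d1 d2)
    moreover have "- (c / (p - 1)) * ((1 - p) * x powr (1 - p - 1))
             + ((G x - B) * (-p * x powr (-p - 1)) + (P x - c) * x powr (-p))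
        = P x * x powr (-p) + p * (B - G x) * x powr (-p - 1)"
      using p by (simp add: field_simps)
    ultimately show "(F has_real_derivative P x * x powr (-p) + p * (B - G x) * x powr (-p - 1)) (at x)"
      by simp
  next
    have lim1: "((\<lambda>r::real. r powr (1 - p)) \<longlongrightarrow> 0) at_top"
      and lim2: "((\<lambda>r::real. 2 * B * r powr (-p)) \<longlongrightarrow> 0) at_top"
      using p by (auto intro!: tendsto_neg_powr filterlim_ident tendsto_mult_right_zero)
    have "\<forall>\<^sub>F r in at_top. norm ((G r - B) * r powr (-p)) \<le> 2 * B * r powr (-p)"
      using G_bound by (intro always_eventually allI) (auto simp: abs_mult abs_le_iff intro!: mult_right_mono)
    then have "((\<lambda>r. (G r - B) * r powr (-p)) \<longlongrightarrow> 0) at_top"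
      using lim2 by (rule Lim_null_comparison)
    then show "(F \<longlongrightarrow> 0) at_top"
      unfolding F_def using tendsto_add_zero[OF tendsto_mult_right_zero[OF lim1]] by blast
  qed measurable
  then show ?thesis by (simp add: F_def diff_diff_eq2)
qed

lemma nn_integral_powr_tail_bounded_le:
  assumes f: "\<And>r. 0 \<le> f r" "\<And>r. f r \<le> M" and p: "0 < p"
  shows "(\<integral>\<^sup>+r. ennreal (p * f r * r powr (-p - 1)) * indicator {1..} r \<partial>lborel) \<le> ennreal M"
proof -
  have M: "0 \<le> M"
    using f[of 0] by linarith
  have "(\<integral>\<^sup>+r. ennreal (p * f r * r powr (-p - 1)) * indicator {1..} r \<partial>lborel)
      \<le> (\<integral>\<^sup>+r. ennreal (p * M) * (ennreal (r powr (-p - 1)) * indicator {1..} r) \<partial>lborel)"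
  proof (intro nn_integral_mono)
    fix r :: real
    have "p * f r * r powr (-p - 1) \<le> p * M * r powr (-p - 1)"
      using f p by (intro mult_right_mono mult_left_mono) auto
    then show "ennreal (p * f r * r powr (-p - 1)) * indicator {1..} r
        \<le> ennreal (p * M) * (ennreal (r powr (-p - 1)) * indicator {1..} r)"
      using p M by (simp add: ennreal_mult[symmetric] ennreal_leI split: split_indicator)
  qed
  also have "\<dots> = ennreal M"
    using nn_integral_powr_atLeast_1[of "-p - 1"] p M
    by (simp add: nn_integral_cmult ennreal_mult[symmetric])
  finally show ?thesis .
qed

lemma nn_integral_powr_tail_near_mean:
  fixes P G :: "real \<Rightarrow> real"
  assumes P_nonneg: "\<And>r. 0 \<le> P r" and [measurable]: "P \<in> borel_measurable borel"
    and G_deriv: "\<And>r. (G has_real_derivative P r - c) (at r)"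
    and G_bound: "\<And>r. \<bar>G r\<bar> \<le> B" and p: "1 < p" and "0 \<le> c"
  shows "\<exists>a. (\<integral>\<^sup>+r. ennreal (P r * r powr (-p)) * indicator {1..} r \<partial>lborel) = ennreal a
           \<and> 0 \<le> a \<and> \<bar>a - c / (p - 1)\<bar> \<le> 2 * B"
proof -
  have B: "0 \<le> B" using G_bound[of 0] by simp
  have [measurable]: "G \<in> borel_measurable borel"
    using G_deriv by (rule borel_measurable_if_has_real_derivative)
  define IP where "IP = (\<integral>\<^sup>+r. ennreal (P r * r powr (-p)) * indicator {1..} r \<partial>lborel)"
  define IG where "IG = (\<integral>\<^sup>+r. ennreal (p * (B - G r) * r powr (-p - 1)) * indicator {1..} r \<partial>lborel)"
  have nonneg: "0 \<le> P r * r powr (-p)" "0 \<le> p * (B - G r) * r powr (-p - 1)" for r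
    using P_nonneg[of r] G_bound[of r] p by (auto simp: abs_le_iff)
  have "IP + IG = (\<integral>\<^sup>+r. ennreal (P r * r powr (-p)) * indicator {1..} r
                       + ennreal (p * (B - G r) * r powr (-p - 1)) * indicator {1..} r \<partial>lborel)"
    unfolding IP_def IG_def by (rule nn_integral_add[symmetric]) auto
  also have "\<dots> = ennreal (c / (p - 1) + B - G 1)"
    unfolding nn_integral_powr_tail_by_parts[OF assms(1-5), symmetric]
    using nonneg by (intro nn_integral_cong) (simp add: distrib_right)
  finally have sum: "IP + IG = ennreal (c / (p - 1) + B - G 1)" .
  have "IG \<le> ennreal (2 * B)"
    unfolding IG_def using G_bound p by (intro nn_integral_powr_tail_bounded_le) (auto simp: abs_le_iff)
  then obtain d where d: "IG = ennreal d" "0 \<le> d" "d \<le> 2 * B"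
    using B by (cases IG) (auto simp: top_unique)
  obtain a where a: "IP = ennreal a" "0 \<le> a"
    using sum by (cases IP) auto
  have "0 \<le> c / (p - 1)"
    using p \<open>0 \<le> c\<close> by simp
  then have "0 \<le> c / (p - 1) + B - G 1"
    using G_bound[of 1] by (simp add: abs_le_iff)
  with sum a d have "a + d = c / (p - 1) + B - G 1"
    by (simp add: ennreal_plus[symmetric] del: ennreal_plus)
  then show ?thesis
    using a d G_bound[of 1] unfolding IP_def by (intro exI[of _ a]) auto
qed

section \<open>The normalising integral\<close>

definition delta_coeff_norm :: "nat \<Rightarrow> real" where
  "delta_coeff_norm m = (\<Sum>j=0..2*m. \<bar>delta_coeff m j\<bar>)"

definition osc_primitive :: "nat \<Rightarrow> real \<Rightarrow> real" where
  "osc_primitive m r = (\<Sum>j\<in>{0..2*m} - {m}. delta_coeff m j * sin ((real m - real j) * r) / (real m - real j))"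

lemma delta_coeff_norm_nonneg: "0 \<le> delta_coeff_norm m"
  unfolding delta_coeff_norm_def by (intro sum_nonneg) auto

lemma osc_primitive_deriv:
  "(osc_primitive m has_real_derivative 2 ^ m * (1 - cos r) ^ m - real ((2 * m) choose m)) (at r)"
proof -
  have "(osc_primitive m has_real_derivative
          (\<Sum>j\<in>{0..2*m} - {m}. delta_coeff m j * cos ((real m - real j) * r))) (at r)"
    unfolding osc_primitive_def by (intro DERIV_sum) (auto intro!: derivative_eq_intros)
  moreover have "2 ^ m * (1 - cos r) ^ m
      = delta_coeff m m + (\<Sum>j\<in>{0..2*m} - {m}. delta_coeff m j * cos ((real m - real j) * r))"
    unfolding sum_delta_coeff_cos[symmetric] by (subst sum.remove[of _ m]) auto
  ultimately show ?thesis by (simp add: delta_coeff_middle)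
qed

lemma abs_osc_primitive_le: "\<bar>osc_primitive m r\<bar> \<le> delta_coeff_norm m"
proof -
  have "\<bar>osc_primitive m r\<bar> \<le> (\<Sum>j\<in>{0..2*m} - {m}. \<bar>delta_coeff m j * sin ((real m - real j) * r) / (real m - real j)\<bar>)"
    unfolding osc_primitive_def by (rule sum_abs)
  also have "\<dots> \<le> (\<Sum>j\<in>{0..2*m} - {m}. \<bar>delta_coeff m j\<bar>)"
  proof (rule sum_mono)
    fix j assume "j \<in> {0..2*m} - {m}"
    then have "1 \<le> \<bar>real m - real j\<bar>" by auto
    then have "\<bar>sin ((real m - real j) * r) / (real m - real j)\<bar> \<le> 1"
      by (auto simp: abs_divide divide_le_eq_1 intro: order_trans[OF abs_sin_le_one])
    from mult_left_le[OF this abs_ge_zero[of "delta_coeff m j"]]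
    show "\<bar>delta_coeff m j * sin ((real m - real j) * r) / (real m - real j)\<bar> \<le> \<bar>delta_coeff m j\<bar>"
      by (simp add: abs_mult abs_divide)
  qed
  also have "\<dots> \<le> delta_coeff_norm m"
    unfolding delta_coeff_norm_def by (rule sum_mono2) auto
  finally show ?thesis .
qed

lemma cos_power_le_square:
  fixes r :: real
  assumes "m \<ge> 1" "\<bar>r\<bar> \<le> 1"
  shows "2 ^ m * (1 - cos r) ^ m \<le> r ^ 2"
proof -
  have "1 - cos r = 2 * sin (r / 2) ^ 2"
    using cos_double_sin[of "r / 2"] by simp
  moreover have "sin (r / 2) ^ 2 \<le> (r / 2) ^ 2"
    using abs_sin_x_le_abs_x[of "r / 2"] by (metis abs_le_square_iff)
  ultimately have "2 * (1 - cos r) \<le> r ^ 2"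
    by (simp add: power_divide)
  moreover have "r ^ 2 \<le> 1"
    using assms(2) by (metis abs_le_square_iff abs_one one_power2)
  ultimately have "(2 * (1 - cos r)) ^ m \<le> (2 * (1 - cos r)) ^ 1"
    using assms(1) by (intro power_decreasing) auto
  moreover have "2 ^ m * (1 - cos r) ^ m = (2 * (1 - cos r)) ^ m"
    by (simp only: power_mult_distrib)
  ultimately show ?thesis
    using \<open>2 * (1 - cos r) \<le> r ^ 2\<close> by simp
qed

definition cos_power_integral :: "nat \<Rightarrow> real \<Rightarrow> ennreal" where
  "cos_power_integral m s = (\<integral>\<^sup>+r. polar_weight s r * ennreal ((1 - cos r) ^ m) \<partial>lborel)"

lemma nn_integral_polar_weight_cos_power_lessThan_1:
  assumes s: "0 < s" "s \<le> 1 / 2" and m: "m \<ge> 1"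
  shows "(\<integral>\<^sup>+r. polar_weight s r * ennreal (2 ^ m * (1 - cos r) ^ m) * indicator {..<1} r \<partial>lborel) \<le> 1"
proof -
  have "(\<integral>\<^sup>+r. polar_weight s r * ennreal (2 ^ m * (1 - cos r) ^ m) * indicator {..<1} r \<partial>lborel)
      \<le> (\<integral>\<^sup>+r. polar_weight s r * indicator {..1} r * ennreal (r powr 2) \<partial>lborel)"
  proof (intro nn_integral_mono)
    fix r :: real
    have "0 < r \<Longrightarrow> r < 1 \<Longrightarrow> 2 ^ m * (1 - cos r) ^ m \<le> r powr 2"
      using cos_power_le_square[OF m, of r] by (simp add: powr_realpow)
    then show "polar_weight s r * ennreal (2 ^ m * (1 - cos r) ^ m) * indicator {..<1} r
        \<le> polar_weight s r * indicator {..1} r * ennreal (r powr 2)"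
      by (auto simp: polar_weight_def indicator_def intro!: mult_left_mono ennreal_leI)
  qed
  also have "\<dots> = ennreal (1 / (2 - 2 * s))"
    using s by (intro nn_integral_polar_weight_powr_atMost_1) auto
  also have "\<dots> \<le> 1"
    using s by (simp add: field_simps)
  finally show ?thesis .
qed

lemma cos_power_integral_near:
  assumes s: "0 < s" "s \<le> 1 / 2" and m: "m \<ge> 1"
  shows "\<exists>v. ennreal (2 ^ m) * cos_power_integral m s = ennreal v \<and> 0 \<le> v
           \<and> \<bar>v - real ((2 * m) choose m) / (2 * s)\<bar> \<le> 1 + 2 * delta_coeff_norm m"
proof -
  define P where "P r = 2 ^ m * (1 - cos r) ^ m" for r :: real
  have P_nonneg: "0 \<le> P r" for r by (simp add: P_def)
  have [measurable]: "P \<in> borel_measurable borel"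
    unfolding P_def by measurable
  define I0 where "I0 = (\<integral>\<^sup>+r. polar_weight s r * ennreal (P r) * indicator {..<1} r \<partial>lborel)"
  define I1 where "I1 = (\<integral>\<^sup>+r. ennreal (P r * r powr (-(1 + 2 * s))) * indicator {1..} r \<partial>lborel)"
  have "ennreal (2 ^ m) * cos_power_integral m s = (\<integral>\<^sup>+r. polar_weight s r * ennreal (P r) \<partial>lborel)"
    unfolding cos_power_integral_def P_def
    by (subst nn_integral_cmult[symmetric]) (auto intro!: nn_integral_cong simp: ennreal_mult' mult_ac)
  also have "\<dots> = (\<integral>\<^sup>+r. polar_weight s r * ennreal (P r) * indicator {..<1} r
                      + ennreal (P r * r powr (-(1 + 2 * s))) * indicator {1..} r \<partial>lborel)"
    using P_nonneg
    by (intro nn_integral_cong)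
       (auto simp: polar_weight_def ennreal_mult'[symmetric] mult.commute split: split_indicator)
  also have "\<dots> = I0 + I1"
    unfolding I0_def I1_def by (rule nn_integral_add) auto
  finally have split: "ennreal (2 ^ m) * cos_power_integral m s = I0 + I1" .
  have "I0 \<le> 1"
    unfolding I0_def P_def by (rule nn_integral_polar_weight_cos_power_lessThan_1[OF s m])
  then obtain b where b: "I0 = ennreal b" "0 \<le> b" "b \<le> 1"
    by (cases I0) (auto simp: top_unique)
  obtain a where a: "I1 = ennreal a" "0 \<le> a"
      "\<bar>a - real ((2 * m) choose m) / (1 + 2 * s - 1)\<bar> \<le> 2 * delta_coeff_norm m"
    using nn_integral_powr_tail_near_mean[where p = "1 + 2 * s",
        OF P_nonneg _ osc_primitive_deriv[of m, folded P_def] abs_osc_primitive_le] s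
    unfolding I1_def by auto
  show ?thesis
    using split a b by (intro exI[of _ "b + a"]) auto
qed

lemma tendsto_cos_power_integral:
  assumes "m \<ge> 1"
  shows "((\<lambda>s. 2 * s * (2 ^ m * enn2real (cos_power_integral m s))) \<longlongrightarrow> real ((2 * m) choose m)) (at_right 0)"
proof (rule tendsto_at_right_0_linear_bound)
  have "\<forall>\<^sub>F s in at_right 0. s \<in> {0<..(1/2::real)}"
    by (rule eventually_at_rightI[of _ "1/2"]) auto
  then show "\<forall>\<^sub>F s in at_right 0.
      \<bar>2 * s * (2 ^ m * enn2real (cos_power_integral m s)) - real ((2 * m) choose m)\<bar>
        \<le> s * (2 * (1 + 2 * delta_coeff_norm m))"
  proof eventually_elim
    case (elim s)
    then have "0 < s" "s \<le> 1/2" by auto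
    then obtain v where v: "ennreal (2 ^ m) * cos_power_integral m s = ennreal v" "0 \<le> v"
        "\<bar>v - real ((2 * m) choose m) / (2 * s)\<bar> \<le> 1 + 2 * delta_coeff_norm m"
      using cos_power_integral_near[OF \<open>0 < s\<close> \<open>s \<le> 1/2\<close> assms] by meson
    have "2 ^ m * enn2real (cos_power_integral m s) = v"
      using arg_cong[OF v(1), of enn2real] v(2) by (simp add: enn2real_mult)
    moreover have "2 * s * v - real ((2 * m) choose m) = s * (2 * (v - real ((2 * m) choose m) / (2 * s)))"
      using \<open>0 < s\<close> by (simp add: field_simps)
    then have "\<bar>2 * s * v - real ((2 * m) choose m)\<bar> \<le> s * (2 * (1 + 2 * delta_coeff_norm m))"
      using v(3) \<open>0 < s\<close> by (simp add: abs_mult)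
    ultimately show ?case
      by simp
  qed
qed

lemma polar_weight_scale:
  assumes "0 < c"
  shows "polar_weight s (c * r) = ennreal (c powr (-1 - 2 * s)) * polar_weight s r"
proof (cases "0 < r")
  case True
  then show ?thesis
    using assms by (simp add: polar_weight_def powr_mult ennreal_mult')
qed (use assms in \<open>simp add: polar_weight_def zero_less_mult_iff\<close>)

lemma nn_integral_polar_weight_cos_scaled:
  assumes "m \<ge> 1"
  shows "(\<integral>\<^sup>+r. polar_weight s r * ennreal ((1 - cos (r * a)) ^ m) \<partial>lborel)
           = ennreal (\<bar>a\<bar> powr (2 * s)) * cos_power_integral m s"
proof (cases "a = 0")
  case True
  then show ?thesis using assms by (simp add: power_0_left)
next
  case False
  let ?L = "\<integral>\<^sup>+r. polar_weight s r * ennreal ((1 - cos (r * a)) ^ m) \<partial>lborel"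
  have a: "0 < \<bar>a\<bar>" using False by simp
  have "cos (\<bar>a\<bar> * r) = cos (r * a)" for r
    by (cases "a \<ge> 0") (auto simp: mult.commute)
  then have "polar_weight s (\<bar>a\<bar> * r) * ennreal ((1 - cos (\<bar>a\<bar> * r)) ^ m)
      = ennreal (\<bar>a\<bar> powr (-1 - 2 * s)) * (polar_weight s r * ennreal ((1 - cos (r * a)) ^ m))" for r
    using a by (simp add: polar_weight_scale mult.assoc)
  then have "cos_power_integral m s = ennreal \<bar>a\<bar> * (ennreal (\<bar>a\<bar> powr (-1 - 2 * s)) * ?L)"
    using nn_integral_real_affine[of "\<lambda>r. polar_weight s r * ennreal ((1 - cos r) ^ m)" "\<bar>a\<bar>" 0] a
    unfolding cos_power_integral_def by (simp add: nn_integral_cmult)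
  also have "\<dots> = ennreal (\<bar>a\<bar> * \<bar>a\<bar> powr (-1 - 2 * s)) * ?L"
    by (simp add: ennreal_mult' mult.assoc)
  also have "\<bar>a\<bar> * \<bar>a\<bar> powr (-1 - 2 * s) = \<bar>a\<bar> powr (-2 * s)"
    using a by (simp add: powr_mult_base)
  finally have "ennreal (\<bar>a\<bar> powr (2 * s)) * cos_power_integral m s
      = ennreal (\<bar>a\<bar> powr (2 * s)) * (ennreal (\<bar>a\<bar> powr (-2 * s)) * ?L)"
    by simp
  also have "\<dots> = ennreal (\<bar>a\<bar> powr (2 * s) * \<bar>a\<bar> powr (-2 * s)) * ?L"
    by (simp add: ennreal_mult' mult.assoc)
  also have "\<bar>a\<bar> powr (2 * s) * \<bar>a\<bar> powr (-2 * s) = 1"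
    using a by (simp add: powr_add[symmetric])
  finally show ?thesis by simp
qed

lemma nn_integral_nu_meas_cos_power:
  fixes \<sigma> :: "'a::euclidean_space measure"
  assumes sets: "sets \<sigma> = sets borel" and "sigma_finite_measure \<sigma>" and m: "m \<ge> 1"
  shows "(\<integral>\<^sup>+y. ennreal ((1 - cos (e \<bullet> y)) ^ m) \<partial>nu_meas \<sigma> s)
           = (\<integral>\<^sup>+\<theta>. ennreal (\<bar>e \<bullet> \<theta>\<bar> powr (2 * s)) \<partial>\<sigma>) * cos_power_integral m s"
proof -
  have "(\<integral>\<^sup>+y. ennreal ((1 - cos (e \<bullet> y)) ^ m) \<partial>nu_meas \<sigma> s)
      = (\<integral>\<^sup>+\<theta>. (\<integral>\<^sup>+r. polar_weight s r * ennreal ((1 - cos (e \<bullet> (r *\<^sub>R \<theta>))) ^ m) \<partial>lborel) \<partial>\<sigma>)"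
    by (rule nn_integral_nu_meas[OF assms(1,2)]) measurable
  also have "\<dots> = (\<integral>\<^sup>+\<theta>. ennreal (\<bar>e \<bullet> \<theta>\<bar> powr (2 * s)) * cos_power_integral m s \<partial>\<sigma>)"
    by (intro nn_integral_cong) (simp add: nn_integral_polar_weight_cos_scaled[OF m, symmetric])
  also have "\<dots> = (\<integral>\<^sup>+\<theta>. ennreal (\<bar>e \<bullet> \<theta>\<bar> powr (2 * s)) \<partial>\<sigma>) * cos_power_integral m s"
    by (rule nn_integral_multc) (simp add: sets_eq_imp_space_eq measurable_cong_sets[OF sets refl])
  finally show ?thesis .
qed

section \<open>The maximum of M over the sphere\<close>

lemma M_fun_nonneg: "0 \<le> M_fun s \<sigma> e"
  unfolding M_fun_def by (rule Bochner_Integration.integral_nonneg) simp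

lemma nn_integral_M_fun:
  assumes \<sigma>: "sphere_prob (\<sigma> :: 'a::euclidean_space measure)" and e: "norm e \<le> 1" and s: "0 \<le> s"
  shows "(\<integral>\<^sup>+\<theta>. ennreal (\<bar>e \<bullet> \<theta>\<bar> powr (2 * s)) \<partial>\<sigma>) = ennreal (M_fun s \<sigma> e)"
    and "M_fun s \<sigma> e \<le> 1"
proof -
  interpret prob_space \<sigma> using \<sigma> by (simp add: sphere_prob_def)
  let ?X = "\<integral>\<^sup>+\<theta>. ennreal (\<bar>e \<bullet> \<theta>\<bar> powr (2 * s)) \<partial>\<sigma>"
  have "?X \<le> (\<integral>\<^sup>+\<theta>. 1 \<partial>\<sigma>)"
    using AE_sphere_prob[OF \<sigma>]
  proof (intro nn_integral_mono_AE, eventually_elim)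
    case (elim \<theta>)
    have "\<bar>e \<bullet> \<theta>\<bar> \<le> norm e * norm \<theta>" by (rule Cauchy_Schwarz_ineq2)
    also have "\<dots> \<le> 1" using elim e by simp
    finally show ?case using s by (simp add: powr_le1)
  qed
  then have X: "?X \<le> 1" by (simp add: emeasure_space_1)
  have sets: "sets \<sigma> = sets borel" using \<sigma> by (simp add: sphere_prob_def)
  have "(\<lambda>\<theta>. \<bar>e \<bullet> \<theta>\<bar> powr (2 * s)) \<in> borel_measurable \<sigma>"
    by (subst measurable_cong_sets[OF sets refl]) measurable
  then have M: "M_fun s \<sigma> e = enn2real ?X"
    unfolding M_fun_def by (rule integral_eq_nn_integral) simp
  have "?X < \<top>"
    using X by (simp add: le_less_trans)
  then show "?X = ennreal (M_fun s \<sigma> e)" and "M_fun s \<sigma> e \<le> 1"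
    unfolding M using X by (simp_all add: enn2real_leI)
qed

definition ball_powr_integral :: "real \<Rightarrow> 'a::euclidean_space \<Rightarrow> ennreal" where
  "ball_powr_integral s \<theta> = (\<integral>\<^sup>+e. indicator (ball 0 1) e * ennreal (\<bar>e \<bullet> \<theta>\<bar> powr (2 * s)) \<partial>lborel)"

lemma AE_inner_nonzero:
  fixes l :: "'a::euclidean_space" assumes "l \<noteq> 0"
  shows "AE e in lborel. e \<bullet> l \<noteq> 0"
proof -
  have "negligible {x. l \<bullet> x = 0}"
    using negligible_hyperplane[of l 0] assms by simp
  moreover have "{x::'a. l \<bullet> x = 0} \<in> sets lborel" by measurable
  ultimately have "{x. l \<bullet> x = 0} \<in> null_sets lborel"
    by (simp only: negligible_iff_null_sets) (simp add: null_sets_completion_iff)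
  from AE_not_in[OF this] show ?thesis by (simp add: inner_commute)
qed

lemma emeasure_unit_ball_neq:
  "emeasure lborel (ball (0::'a::euclidean_space) 1) \<noteq> 0"
  "emeasure lborel (ball (0::'a::euclidean_space) 1) \<noteq> \<top>"
proof -
  have "0 < emeasure lborel (ball (0::'a) 1)"
    by (auto simp: emeasure_ball unit_ball_vol_pos)
  then show "emeasure lborel (ball (0::'a) 1) \<noteq> 0" by simp
  show "emeasure lborel (ball (0::'a) 1) \<noteq> \<top>"
    using emeasure_lborel_ball_finite[of "0::'a" 1] by simp
qed

lemma emeasure_ball_le_liminf_ball_powr_integral:
  fixes \<Theta> :: "nat \<Rightarrow> 'a::euclidean_space" and S :: "nat \<Rightarrow> real"
  assumes \<Theta>: "\<Theta> \<longlonglongrightarrow> l" and "l \<noteq> 0" and S: "S \<longlonglongrightarrow> 0"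
  shows "emeasure lborel (ball (0::'a) 1) \<le> liminf (\<lambda>n. ball_powr_integral (S n) (\<Theta> n))"
proof -
  have [measurable]: "ball (0::'a) 1 \<in> sets borel" by simp
  define g where "g = (\<lambda>n e. indicator (ball 0 1) e * ennreal (\<bar>e \<bullet> \<Theta> n\<bar> powr (2 * S n)))"
  have "AE e in lborel. liminf (\<lambda>n. g n e) = indicator (ball 0 1) e"
    using AE_inner_nonzero[OF \<open>l \<noteq> 0\<close>]
  proof eventually_elim
    case (elim e)
    have "(\<lambda>n. \<bar>e \<bullet> \<Theta> n\<bar> powr (2 * S n)) \<longlonglongrightarrow> \<bar>e \<bullet> l\<bar> powr (2 * 0)"
      using elim by (intro tendsto_powr tendsto_intros \<Theta> S) auto
    then have "(\<lambda>n. ennreal (\<bar>e \<bullet> \<Theta> n\<bar> powr (2 * S n))) \<longlonglongrightarrow> ennreal 1"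
      using elim by (intro tendsto_ennrealI) simp
    then have "(\<lambda>n. g n e) \<longlonglongrightarrow> indicator (ball 0 1) e"
      unfolding g_def by (cases "e \<in> ball 0 1") auto
    then show ?case by (rule lim_imp_Liminf[OF trivial_limit_sequentially])
  qed
  from nn_integral_cong_AE[OF this]
  have "emeasure lborel (ball (0::'a) 1) = (\<integral>\<^sup>+e. liminf (\<lambda>n. g n e) \<partial>lborel)"
    by simp
  also have "\<dots> \<le> liminf (\<lambda>n. integral\<^sup>N lborel (g n))"
    unfolding g_def by (rule nn_integral_liminf) measurable
  finally show ?thesis
    unfolding g_def ball_powr_integral_def .
qed

lemma ball_powr_integral_uniform:
  assumes \<epsilon>: "\<epsilon> > 0"
  shows "\<forall>\<^sub>F s in at_right 0. \<forall>\<theta>\<in>sphere (0::'a::euclidean_space) 1.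
           ennreal (1 - \<epsilon>) * emeasure lborel (ball (0::'a) 1) \<le> ball_powr_integral s \<theta>"
proof (rule ccontr)
  let ?B = "emeasure lborel (ball (0::'a) 1)"
  assume "\<not> ?thesis"
  then have "\<forall>\<delta>>0. \<exists>s \<theta>. 0 < s \<and> s < \<delta> \<and> \<theta> \<in> sphere (0::'a) 1
               \<and> ball_powr_integral s \<theta> < ennreal (1 - \<epsilon>) * ?B"
    unfolding eventually_at_right_field by (force simp: not_le)
  then have "\<forall>n::nat. \<exists>s \<theta>. 0 < s \<and> s < 1 / Suc n \<and> \<theta> \<in> sphere (0::'a) 1
               \<and> ball_powr_integral s \<theta> < ennreal (1 - \<epsilon>) * ?B"
    by simp
  then obtain S \<Theta> where S: "\<And>n. 0 < S n" "\<And>n. S n < 1 / Suc n"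
    and \<Theta>: "\<And>n. \<Theta> n \<in> sphere (0::'a) 1"
    and small: "\<And>n. ball_powr_integral (S n) (\<Theta> n) < ennreal (1 - \<epsilon>) * ?B"
    by metis
  obtain l r where l: "l \<in> sphere (0::'a) 1" and r: "strict_mono r" and lim: "(\<Theta> \<circ> r) \<longlonglongrightarrow> l"
    using compact_imp_seq_compact[OF compact_sphere] \<Theta> unfolding seq_compact_def by metis
  have "S \<longlonglongrightarrow> 0"
    using S by (intro tendsto_sandwich[OF _ _ tendsto_const LIMSEQ_inverse_real_of_nat[unfolded inverse_eq_divide]])
      (auto intro: always_eventually less_imp_le)
  then have "(S \<circ> r) \<longlonglongrightarrow> 0"
    using r by (rule LIMSEQ_subseq_LIMSEQ)
  moreover have "l \<noteq> 0" using l by auto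
  ultimately have "?B \<le> liminf (\<lambda>n. ball_powr_integral (S (r n)) (\<Theta> (r n)))"
    using emeasure_ball_le_liminf_ball_powr_integral[OF lim, of "S \<circ> r"] by simp
  also have "\<dots> \<le> limsup (\<lambda>n. ball_powr_integral (S (r n)) (\<Theta> (r n)))"
    by (rule Liminf_le_Limsup) simp
  also have "\<dots> \<le> ennreal (1 - \<epsilon>) * ?B"
    using small by (intro Limsup_bounded always_eventually allI less_imp_le)
  finally have "?B * 1 \<le> ?B * ennreal (1 - \<epsilon>)"
    by (simp add: mult.commute)
  then have "1 \<le> ennreal (1 - \<epsilon>)"
    by (simp only: ennreal_mult_le_mult_iff emeasure_unit_ball_neq not_False_eq_True)
  then show False
    using \<epsilon> by simp
qed

lemma nn_integral_abs_inner_powr_le_max: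
  fixes \<sigma> :: "'a::euclidean_space measure"
  assumes \<sigma>: "sphere_prob \<sigma>" and s: "0 < s" and e: "norm e \<le> 1"
    and Mx: "\<And>e'. e' \<in> sphere 0 1 \<Longrightarrow> M_fun s \<sigma> e' \<le> Mx"
  shows "(\<integral>\<^sup>+\<theta>. ennreal (\<bar>e \<bullet> \<theta>\<bar> powr (2 * s)) \<partial>\<sigma>) \<le> ennreal Mx"
proof (cases "e = 0")
  case True
  obtain b :: 'a where "b \<in> Basis" using nonempty_Basis by blast
  then have "0 \<le> Mx" using Mx[of b] M_fun_nonneg[of s \<sigma> b] by simp
  then show ?thesis using True s by simp
next
  case False
  have "(\<integral>\<^sup>+\<theta>. ennreal (\<bar>e \<bullet> \<theta>\<bar> powr (2 * s)) \<partial>\<sigma>) \<le> (\<integral>\<^sup>+\<theta>. ennreal (\<bar>sgn e \<bullet> \<theta>\<bar> powr (2 * s)) \<partial>\<sigma>)"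
  proof (intro nn_integral_mono ennreal_leI)
    fix \<theta> :: 'a
    have "e = norm e *\<^sub>R sgn e"
      using False by (simp add: sgn_div_norm)
    then have "\<bar>e \<bullet> \<theta>\<bar> = norm e * \<bar>sgn e \<bullet> \<theta>\<bar>"
      by (metis abs_mult abs_norm_cancel inner_scaleR_left)
    then have "\<bar>e \<bullet> \<theta>\<bar> powr (2 * s) = norm e powr (2 * s) * \<bar>sgn e \<bullet> \<theta>\<bar> powr (2 * s)"
      by (simp add: powr_mult)
    also have "\<dots> \<le> 1 * \<bar>sgn e \<bullet> \<theta>\<bar> powr (2 * s)"
      using e s by (intro mult_right_mono powr_le1) auto
    finally show "\<bar>e \<bullet> \<theta>\<bar> powr (2 * s) \<le> \<bar>sgn e \<bullet> \<theta>\<bar> powr (2 * s)" by simp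
  qed
  also have "\<dots> = ennreal (M_fun s \<sigma> (sgn e))"
    using False s by (intro nn_integral_M_fun(1)[OF \<sigma>]) (auto simp: norm_sgn)
  also have "\<dots> \<le> ennreal Mx"
    using False by (intro ennreal_leI Mx) (simp add: norm_sgn)
  finally show ?thesis .
qed

lemma nn_integral_ball_powr_integral_le:
  fixes \<sigma> :: "'a::euclidean_space measure"
  assumes \<sigma>: "sphere_prob \<sigma>" and s: "0 < s"
    and Mx: "\<And>e'. e' \<in> sphere 0 1 \<Longrightarrow> M_fun s \<sigma> e' \<le> Mx"
  shows "(\<integral>\<^sup>+\<theta>. ball_powr_integral s \<theta> \<partial>\<sigma>) \<le> emeasure lborel (ball (0::'a) 1) * ennreal Mx"
proof -
  have sets: "sets \<sigma> = sets borel" and "prob_space \<sigma>"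
    using \<sigma> by (auto simp: sphere_prob_def)
  interpret pair_sigma_finite lborel \<sigma>
    using \<open>prob_space \<sigma>\<close> by (simp add: pair_sigma_finite_def prob_space_imp_sigma_finite lborel.sigma_finite_measure_axioms)
  have [measurable]: "ball (0::'a) 1 \<in> sets borel" by simp
  have sp: "sets (lborel \<Otimes>\<^sub>M \<sigma>) = sets (borel \<Otimes>\<^sub>M (borel :: 'a measure))"
    by (intro sets_pair_measure_cong) (auto simp: sets)
  have "(\<lambda>(e, \<theta>). indicator (ball (0::'a) 1) e * ennreal (\<bar>e \<bullet> \<theta>\<bar> powr (2 * s)))
      \<in> borel_measurable (lborel \<Otimes>\<^sub>M \<sigma>)"
    by (subst measurable_cong_sets[OF sp refl]) measurable
  then have "(\<integral>\<^sup>+\<theta>. ball_powr_integral s \<theta> \<partial>\<sigma>)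
      = (\<integral>\<^sup>+e. (\<integral>\<^sup>+\<theta>. indicator (ball (0::'a) 1) e * ennreal (\<bar>e \<bullet> \<theta>\<bar> powr (2 * s)) \<partial>\<sigma>) \<partial>lborel)"
    unfolding ball_powr_integral_def by (rule Fubini')
  also have "\<dots> = (\<integral>\<^sup>+e. indicator (ball (0::'a) 1) e * (\<integral>\<^sup>+\<theta>. ennreal (\<bar>e \<bullet> \<theta>\<bar> powr (2 * s)) \<partial>\<sigma>) \<partial>lborel)"
    by (intro nn_integral_cong nn_integral_cmult) (simp add: measurable_cong_sets[OF sets refl])
  also have "\<dots> \<le> (\<integral>\<^sup>+e. indicator (ball (0::'a) 1) e * ennreal Mx \<partial>lborel)"
    using nn_integral_abs_inner_powr_le_max[OF \<sigma> s _ Mx]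
    by (intro nn_integral_mono) (auto intro: mult_left_mono split: split_indicator)
  also have "\<dots> = emeasure lborel (ball (0::'a) 1) * ennreal Mx"
    by (simp add: nn_integral_multc)
  finally show ?thesis .
qed

lemma M_fun_max_ge:
  fixes \<sigma> :: "'a::euclidean_space measure"
  assumes \<sigma>: "sphere_prob \<sigma>" and s: "0 < s"
    and Mx: "\<And>e'. e' \<in> sphere 0 1 \<Longrightarrow> M_fun s \<sigma> e' \<le> Mx"
    and unif: "\<forall>\<theta>\<in>sphere (0::'a) 1. ennreal (1 - \<epsilon>) * emeasure lborel (ball (0::'a) 1) \<le> ball_powr_integral s \<theta>"
  shows "1 - \<epsilon> \<le> Mx"
proof -
  let ?B = "emeasure lborel (ball (0::'a) 1)"
  obtain b :: 'a where "b \<in> Basis" using nonempty_Basis by blast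
  then have "0 \<le> Mx" using Mx[of b] M_fun_nonneg[of s \<sigma> b] by simp
  have "ennreal (1 - \<epsilon>) * ?B = (\<integral>\<^sup>+\<theta>. ennreal (1 - \<epsilon>) * ?B \<partial>\<sigma>)"
    using \<sigma> by (simp add: sphere_prob_def prob_space.emeasure_space_1)
  also have "\<dots> \<le> (\<integral>\<^sup>+\<theta>. ball_powr_integral s \<theta> \<partial>\<sigma>)"
    using AE_sphere_prob[OF \<sigma>] unif by (intro nn_integral_mono_AE) (auto elim: eventually_mono)
  also have "\<dots> \<le> ?B * ennreal Mx"
    by (rule nn_integral_ball_powr_integral_le[OF \<sigma> s Mx])
  finally have "?B * ennreal (1 - \<epsilon>) \<le> ?B * ennreal Mx"
    by (simp add: mult.commute)
  then have "ennreal (1 - \<epsilon>) \<le> ennreal Mx"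
    by (simp add: ennreal_mult_le_mult_iff emeasure_unit_ball_neq)
  then show ?thesis
    using \<open>0 \<le> Mx\<close> by (auto simp: ennreal_le_iff2)
qed

lemma tendsto_M_fun_max:
  fixes \<sigma> :: "real \<Rightarrow> 'a::euclidean_space measure" and e :: "real \<Rightarrow> 'a"
  assumes max: "\<forall>\<^sub>F s in at_right 0. sphere_prob (\<sigma> s) \<and> e s \<in> sphere 0 1
                   \<and> (\<forall>\<theta>\<in>sphere 0 1. M_fun s (\<sigma> s) \<theta> \<le> M_fun s (\<sigma> s) (e s))"
  shows "((\<lambda>s. M_fun s (\<sigma> s) (e s)) \<longlongrightarrow> 1) (at_right 0)"
proof -
  have pos: "\<forall>\<^sub>F s in at_right 0. (0::real) < s"
    by (simp add: eventually_at_right_less)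
  show ?thesis
  proof (rule order_tendstoI)
    fix a :: real
    assume "1 < a"
    from max pos show "\<forall>\<^sub>F s in at_right 0. M_fun s (\<sigma> s) (e s) < a"
    proof eventually_elim
      case (elim s)
      then have "M_fun s (\<sigma> s) (e s) \<le> 1"
        by (intro nn_integral_M_fun(2)) auto
      then show ?case using \<open>1 < a\<close> by linarith
    qed
  next
    fix a :: real
    assume "a < 1"
    define \<epsilon> where "\<epsilon> = (1 - a) / 2"
    have "0 < \<epsilon>" using \<open>a < 1\<close> by (simp add: \<epsilon>_def)
    from max pos ball_powr_integral_uniform[OF \<open>0 < \<epsilon>\<close>, where 'a='a]
    show "\<forall>\<^sub>F s in at_right 0. a < M_fun s (\<sigma> s) (e s)"
    proof eventually_elim
      case (elim s)
      then have "1 - \<epsilon> \<le> M_fun s (\<sigma> s) (e s)"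
        by (intro M_fun_max_ge[where \<sigma> = "\<sigma> s" and s = s]) blast+
      moreover have "a < 1 - \<epsilon>" using \<open>a < 1\<close> by (simp add: \<epsilon>_def field_simps)
      ultimately show ?case by linarith
    qed
  qed
qed

section \<open>The integral of the difference operator\<close>

lemma holder_imp_continuous_on:
  fixes u :: "'a::real_normed_vector \<Rightarrow> real"
  assumes hol: "\<And>y z. \<bar>u y - u z\<bar> \<le> C * norm (y - z) powr \<beta>" and "0 < \<beta>"
  shows "continuous_on UNIV u"
proof (intro continuous_at_imp_continuous_on ballI)
  fix z :: 'a
  have "((\<lambda>y. norm (y - z)) \<longlongrightarrow> 0) (at z)"
    by (intro tendsto_norm_zero LIM_zero tendsto_ident_at)
  then have "((\<lambda>y. C * norm (y - z) powr \<beta>) \<longlongrightarrow> 0) (at z)"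
    using \<open>0 < \<beta>\<close> by (intro tendsto_mult_right_zero tendsto_zero_powrI) auto
  then have "((\<lambda>y. u y - u z) \<longlongrightarrow> 0) (at z)"
    by (rule Lim_null_comparison[rotated]) (simp add: hol)
  then show "isCont u z"
    unfolding isCont_def by (rule LIM_zero_cancel)
qed

lemma holder_compact_supportE:
  fixes u :: "'a::euclidean_space \<Rightarrow> real"
  assumes "\<exists>C. \<forall>y z. \<bar>u y - u z\<bar> \<le> C * norm (y - z) powr \<beta>" and "0 < \<beta>"
    and "\<exists>K. compact K \<and> (\<forall>y. y \<notin> K \<longrightarrow> u y = 0)"
  obtains C \<rho> U where "0 \<le> C" "\<And>y z. \<bar>u y - u z\<bar> \<le> C * norm (y - z) powr \<beta>"
    and "0 \<le> \<rho>" "\<And>z. \<rho> \<le> norm z \<Longrightarrow> u z = 0" and "\<And>z. \<bar>u z\<bar> \<le> U"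
    and "continuous_on UNIV u"
proof -
  obtain C where hol: "\<And>y z. \<bar>u y - u z\<bar> \<le> C * norm (y - z) powr \<beta>"
    using assms(1) by blast
  obtain b :: 'a where "b \<in> Basis" using nonempty_Basis by blast
  then have "0 \<le> C" using hol[of b 0] by (simp add: order_trans)
  have cont: "continuous_on UNIV u"
    using hol \<open>0 < \<beta>\<close> by (rule holder_imp_continuous_on)
  obtain K where K: "compact K" "\<And>y. y \<notin> K \<Longrightarrow> u y = 0"
    using assms(3) by blast
  obtain \<rho> where \<rho>: "0 \<le> \<rho>" "\<And>z. z \<in> K \<Longrightarrow> norm z < \<rho>"
    using compact_imp_bounded[OF K(1)] unfolding bounded_pos
    by (metis gt_ex le_less_trans less_eq_real_def zero_less_one order.strict_trans1)
  then have supp: "\<rho> \<le> norm z \<Longrightarrow> u z = 0" for z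
    using K(2) by force
  obtain U where "\<And>v. v \<in> u ` K \<Longrightarrow> norm v \<le> U"
    using compact_imp_bounded[OF compact_continuous_image[OF continuous_on_subset[OF cont] K(1)]]
    unfolding bounded_iff by blast
  then have "\<bar>u z\<bar> \<le> max 0 U" for z
    using K(2)[of z] by (cases "z \<in> K") force+
  with that \<open>0 \<le> C\<close> hol \<rho>(1) supp cont show thesis by blast
qed

lemma delta_m_minus_centre:
  "delta_m m u x y - real ((2 * m) choose m) * u x
     = (\<Sum>j\<in>{0..2*m} - {m}. delta_coeff m j * u (x + (real m - real j) *\<^sub>R y))"
  unfolding delta_m_eq_sum_delta_coeff by (subst sum.remove[of _ m]) (auto simp: delta_coeff_middle)

lemma abs_delta_m_minus_centre_le:
  assumes "\<And>z. \<bar>u z\<bar> \<le> U"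
  shows "\<bar>delta_m m u x y - real ((2 * m) choose m) * u x\<bar> \<le> delta_coeff_norm m * U"
proof -
  have "\<bar>\<Sum>j\<in>{0..2*m} - {m}. delta_coeff m j * u (x + (real m - real j) *\<^sub>R y)\<bar>
      \<le> (\<Sum>j\<in>{0..2*m} - {m}. \<bar>delta_coeff m j\<bar> * U)"
    by (rule order_trans[OF sum_abs sum_mono]) (auto simp: abs_mult intro!: mult_left_mono assms)
  also have "\<dots> \<le> (\<Sum>j=0..2*m. \<bar>delta_coeff m j\<bar> * U)"
    using assms[of 0] by (intro sum_mono2) auto
  finally show ?thesis
    by (simp add: delta_m_minus_centre delta_coeff_norm_def sum_distrib_right)
qed

lemma delta_m_eq_centre_far:
  assumes supp: "\<And>z. \<rho> \<le> norm z \<Longrightarrow> u z = 0" and y: "\<rho> + norm x \<le> norm y"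
  shows "delta_m m u x y = real ((2 * m) choose m) * u x"
proof -
  have "u (x + (real m - real j) *\<^sub>R y) = 0" if "j \<in> {0..2*m} - {m}" for j
  proof (rule supp)
    have "1 \<le> \<bar>real m - real j\<bar>" using that by auto
    then have "norm y \<le> norm ((real m - real j) *\<^sub>R y)"
      by (simp add: mult_le_cancel_right1)
    also have "\<dots> \<le> norm (x + (real m - real j) *\<^sub>R y) + norm x"
      by (metis add.commute add_diff_cancel_left' norm_triangle_ineq4)
    finally show "\<rho> \<le> norm (x + (real m - real j) *\<^sub>R y)" using y by simp
  qed
  then show ?thesis
    using delta_m_minus_centre[of m u x y] by simp
qed

lemma abs_delta_m_le_holder:
  assumes hol: "\<And>y z. \<bar>u y - u z\<bar> \<le> C * norm (y - z) powr \<beta>" and C: "0 \<le> C"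
    and \<beta>: "0 < \<beta>" "\<beta> \<le> 1" and m: "m \<ge> 1"
  shows "\<bar>delta_m m u x y\<bar> \<le> delta_coeff_norm m * C * real m * norm y powr \<beta>"
proof -
  have "delta_m m u x y = (\<Sum>j=0..2*m. delta_coeff m j * (u (x + (real m - real j) *\<^sub>R y) - u x))"
    using sum_delta_coeff_eq_0[OF m]
    by (simp add: delta_m_eq_sum_delta_coeff right_diff_distrib sum_subtractf flip: sum_distrib_right)
  also have "\<bar>\<dots>\<bar> \<le> (\<Sum>j=0..2*m. \<bar>delta_coeff m j\<bar> * (C * real m * norm y powr \<beta>))"
  proof (rule order_trans[OF sum_abs sum_mono])
    fix j assume j: "j \<in> {0..2*m}"
    have "norm ((real m - real j) *\<^sub>R y) \<le> real m * norm y"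
      using j by (auto intro!: mult_right_mono)
    then have "norm ((real m - real j) *\<^sub>R y) powr \<beta> \<le> real m powr \<beta> * norm y powr \<beta>"
      using \<beta> by (auto simp: powr_mult[symmetric] intro!: powr_mono2)
    also have "\<dots> \<le> real m * norm y powr \<beta>"
      using m \<beta> powr_mono[of \<beta> 1 "real m"] by (intro mult_right_mono) auto
    finally have "\<bar>u (x + (real m - real j) *\<^sub>R y) - u x\<bar> \<le> C * (real m * norm y powr \<beta>)"
      using hol[of "x + (real m - real j) *\<^sub>R y" x] C by (auto intro: order_trans mult_left_mono)
    then show "\<bar>delta_coeff m j * (u (x + (real m - real j) *\<^sub>R y) - u x)\<bar>
        \<le> \<bar>delta_coeff m j\<bar> * (C * real m * norm y powr \<beta>)"
      by (simp add: abs_mult mult_left_mono mult.assoc)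
  qed
  finally show ?thesis
    by (simp add: delta_coeff_norm_def sum_distrib_left mult_ac)
qed

lemma nn_integral_polar_weight_two_piece_le:
  assumes s: "0 < s" "2 * s < \<beta>" and K: "0 \<le> K" and A: "0 \<le> A" and R: "1 \<le> R"
  shows "(\<integral>\<^sup>+r. polar_weight s r * ennreal (indicator {..<1} r * (K * r powr \<beta>) + indicator {1..R} r * A) \<partial>lborel)
           \<le> ennreal (K / (\<beta> - 2 * s) + A * (R - 1))"
proof -
  have "(\<integral>\<^sup>+r. polar_weight s r * ennreal (indicator {..<1} r * (K * r powr \<beta>) + indicator {1..R} r * A) \<partial>lborel)
      \<le> (\<integral>\<^sup>+r. ennreal K * (polar_weight s r * indicator {..1} r * ennreal (r powr \<beta>))
                + ennreal A * indicator {1..R} r \<partial>lborel)"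
  proof (intro nn_integral_mono)
    fix r :: real
    show "polar_weight s r * ennreal (indicator {..<1} r * (K * r powr \<beta>) + indicator {1..R} r * A)
        \<le> ennreal K * (polar_weight s r * indicator {..1} r * ennreal (r powr \<beta>)) + ennreal A * indicator {1..R} r"
    proof (cases "r < 1")
      case True
      then show ?thesis using K by (simp add: ennreal_mult' mult_ac)
    next
      case False
      then have "polar_weight s r \<le> 1"
        using s powr_mono[of "-1 - 2 * s" 0 r] by (simp add: polar_weight_def)
      then have "polar_weight s r * ennreal A \<le> ennreal A"
        using mult_right_mono[of _ 1 "ennreal A"] by simp
      then show ?thesis using False by (auto split: split_indicator intro: add_increasing)
    qed
  qed
  also have "\<dots> = ennreal K * ennreal (1 / (\<beta> - 2 * s)) + ennreal A * ennreal (R - 1)"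
    using s R by (simp add: nn_integral_add nn_integral_cmult nn_integral_polar_weight_powr_atMost_1)
  also have "\<dots> = ennreal (K / (\<beta> - 2 * s) + A * (R - 1))"
    using s K A R by (simp add: ennreal_mult[symmetric] ennreal_plus[symmetric] del: ennreal_plus)
  finally show ?thesis .
qed

lemma abs_delta_m_remainder_le:
  assumes hol: "\<And>y z. \<bar>u y - u z\<bar> \<le> C * norm (y - z) powr \<beta>" and C: "0 \<le> C"
    and \<beta>: "0 < \<beta>" "\<beta> \<le> 1" and m: "m \<ge> 1"
    and ub: "\<And>z. \<bar>u z\<bar> \<le> U" and supp: "\<And>z. \<rho> \<le> norm z \<Longrightarrow> u z = 0"
  shows "\<bar>delta_m m u x y - real ((2 * m) choose m) * u x * indicator {y. 1 \<le> norm y} y\<bar>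
           \<le> indicator {..<1} (norm y) * (delta_coeff_norm m * C * real m * norm y powr \<beta>)
             + indicator {1..\<rho> + norm x + 1} (norm y) * (delta_coeff_norm m * U)"
proof -
  have "0 \<le> delta_coeff_norm m * C * real m * norm y powr \<beta>" "0 \<le> delta_coeff_norm m * U"
    using delta_coeff_norm_nonneg[of m] C ub[of 0] by auto
  moreover have "norm y < 1 \<Longrightarrow> \<bar>delta_m m u x y\<bar> \<le> delta_coeff_norm m * C * real m * norm y powr \<beta>"
    using abs_delta_m_le_holder[OF hol C \<beta> m] .
  moreover have "\<bar>delta_m m u x y - real ((2 * m) choose m) * u x\<bar> \<le> delta_coeff_norm m * U"
    using abs_delta_m_minus_centre_le[OF ub] .
  moreover have "\<rho> + norm x + 1 < norm y \<Longrightarrow> delta_m m u x y = real ((2 * m) choose m) * u x"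
    by (intro delta_m_eq_centre_far[where \<rho> = \<rho>]) (use supp in auto)
  ultimately show ?thesis
    by (auto simp: indicator_def not_le)
qed

lemma nn_integral_delta_m_remainder_le:
  fixes u :: "'a::euclidean_space \<Rightarrow> real"
  assumes \<sigma>: "sphere_prob (\<sigma> :: 'a measure)" and s: "0 < s" "4 * s < \<beta>" and \<beta>: "\<beta> \<le> 1"
    and hol: "\<And>y z. \<bar>u y - u z\<bar> \<le> C * norm (y - z) powr \<beta>" and C: "0 \<le> C" and m: "m \<ge> 1"
    and ub: "\<And>z. \<bar>u z\<bar> \<le> U" and supp: "\<And>z. \<rho> \<le> norm z \<Longrightarrow> u z = 0" and \<rho>: "0 \<le> \<rho>"
  shows "(\<integral>\<^sup>+y. ennreal \<bar>delta_m m u x y - real ((2 * m) choose m) * u x * indicator {y. 1 \<le> norm y} y\<bar>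
              \<partial>nu_meas \<sigma> s)
           \<le> ennreal (2 * delta_coeff_norm m * C * real m / \<beta> + delta_coeff_norm m * U * (\<rho> + norm x))"
proof -
  define K where "K = delta_coeff_norm m * C * real m"
  define H where "H r = indicator {..<1} r * (K * r powr \<beta>)
                      + indicator {1..\<rho> + norm x + 1} r * (delta_coeff_norm m * U)" for r
  have K: "0 \<le> K" and NU: "0 \<le> delta_coeff_norm m * U"
    using C ub[of 0] delta_coeff_norm_nonneg[of m] by (auto simp: K_def)
  have "(\<integral>\<^sup>+y. ennreal \<bar>delta_m m u x y - real ((2 * m) choose m) * u x * indicator {y. 1 \<le> norm y} y\<bar>
              \<partial>nu_meas \<sigma> s)
      \<le> (\<integral>\<^sup>+y. ennreal (H (norm y)) \<partial>nu_meas \<sigma> s)"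
    using abs_delta_m_remainder_le[OF hol C _ \<beta> m ub supp] s
    by (intro nn_integral_mono ennreal_leI) (simp add: H_def K_def)
  also have "\<dots> = (\<integral>\<^sup>+r. polar_weight s r * ennreal (H r) \<partial>lborel)"
    by (rule nn_integral_nu_meas_radial[OF \<sigma>]) (simp add: H_def)
  also have "\<dots> \<le> ennreal (K / (\<beta> - 2 * s) + delta_coeff_norm m * U * (\<rho> + norm x))"
    unfolding H_def using nn_integral_polar_weight_two_piece_le[OF s(1) _ K NU, of \<beta> "\<rho> + norm x + 1"] s \<rho>
    by simp
  also have "K / (\<beta> - 2 * s) \<le> 2 * K / \<beta>"
    using s K by (simp add: field_simps mult_left_mono)
  finally show ?thesis
    by (simp add: K_def ennreal_leI mult.assoc)
qed

lemma nu_integral_delta_m_near: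
  fixes u :: "'a::euclidean_space \<Rightarrow> real"
  assumes \<sigma>: "sphere_prob (\<sigma> :: 'a measure)" and s: "0 < s" "4 * s < \<beta>" and \<beta>: "\<beta> \<le> 1"
    and hol: "\<And>y z. \<bar>u y - u z\<bar> \<le> C * norm (y - z) powr \<beta>" and C: "0 \<le> C" and m: "m \<ge> 1"
    and ub: "\<And>z. \<bar>u z\<bar> \<le> U" and supp: "\<And>z. \<rho> \<le> norm z \<Longrightarrow> u z = 0" and \<rho>: "0 \<le> \<rho>"
    and cont: "continuous_on UNIV u"
  shows "\<bar>(\<integral>y. delta_m m u x y \<partial>nu_meas \<sigma> s) - real ((2 * m) choose m) * u x / (2 * s)\<bar>
           \<le> 2 * delta_coeff_norm m * C * real m / \<beta> + delta_coeff_norm m * U * (\<rho> + norm x)"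
    (is "_ \<le> ?bound")
proof -
  let ?\<nu> = "nu_meas \<sigma> s"
  define A where "A = {y::'a. 1 \<le> norm y}"
  define h where "h y = delta_m m u x y - real ((2 * m) choose m) * u x * indicator A y" for y
  have [measurable]: "u \<in> borel_measurable borel" "A \<in> sets borel"
    using cont by (auto simp: A_def borel_measurable_continuous_onI)
  have [measurable]: "h \<in> borel_measurable ?\<nu>"
    unfolding h_def[abs_def] delta_m_def measurable_cong_sets[OF sets_nu_meas refl] by measurable
  have h_bound: "(\<integral>\<^sup>+y. ennreal (norm (h y)) \<partial>?\<nu>) \<le> ennreal ?bound"
    unfolding h_def A_def using nn_integral_delta_m_remainder_le[OF assms(1-10)] by simp
  then have "integrable ?\<nu> h"
    by (intro integrableI_bounded) (simp_all add: le_less_trans)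
  moreover have "integrable ?\<nu> (indicator A :: 'a \<Rightarrow> real)" "measure ?\<nu> A = 1 / (2 * s)"
    using emeasure_nu_meas_outside_ball[OF \<sigma> s(1)] s(1)
    by (auto simp: A_def measure_def sets_nu_meas intro!: integrable_real_indicator)
  moreover have "(\<integral>y. delta_m m u x y \<partial>?\<nu>) = (\<integral>y. real ((2 * m) choose m) * u x * indicator A y + h y \<partial>?\<nu>)"
    by (simp add: h_def)
  ultimately have "(\<integral>y. delta_m m u x y \<partial>?\<nu>) - real ((2 * m) choose m) * u x / (2 * s) = (\<integral>y. h y \<partial>?\<nu>)"
    using sets_eq_imp_space_eq[OF sets_nu_meas[of \<sigma> s]] by simp
  moreover have "ennreal (norm (\<integral>y. h y \<partial>?\<nu>)) \<le> ennreal ?bound"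
    using integral_norm_bound_ennreal[OF \<open>integrable ?\<nu> h\<close>] h_bound by (rule order.trans)
  moreover have "0 \<le> ?bound"
    using C ub[of 0] delta_coeff_norm_nonneg[of m] s \<rho> by simp
  ultimately show ?thesis
    by (simp add: ennreal_le_iff)
qed

lemma tendsto_nu_integral_delta_m:
  fixes u :: "'a::euclidean_space \<Rightarrow> real" and \<sigma> :: "real \<Rightarrow> 'a measure"
  assumes \<sigma>: "\<forall>\<^sub>F s in at_right 0. sphere_prob (\<sigma> s)" and m: "m \<ge> 1" and \<beta>: "0 < \<beta>" "\<beta> \<le> 1"
    and hol: "\<exists>C. \<forall>y z. \<bar>u y - u z\<bar> \<le> C * norm (y - z) powr \<beta>"
    and supp: "\<exists>K. compact K \<and> (\<forall>y. y \<notin> K \<longrightarrow> u y = 0)"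
  shows "((\<lambda>s. 2 * s * (\<integral>y. delta_m m u x y \<partial>nu_meas (\<sigma> s) s)) \<longlongrightarrow> real ((2 * m) choose m) * u x) (at_right 0)"
proof -
  obtain C \<rho> U where C: "0 \<le> C" "\<And>y z. \<bar>u y - u z\<bar> \<le> C * norm (y - z) powr \<beta>"
    and \<rho>: "0 \<le> \<rho>" "\<And>z. \<rho> \<le> norm z \<Longrightarrow> u z = 0" and U: "\<And>z. \<bar>u z\<bar> \<le> U"
    and cont: "continuous_on UNIV u"
    using holder_compact_supportE[OF hol \<beta>(1) supp] by blast
  define B where "B = 2 * delta_coeff_norm m * C * real m / \<beta> + delta_coeff_norm m * U * (\<rho> + norm x)"
  have "\<forall>\<^sub>F s in at_right 0. 0 < s \<and> s < \<beta> / 4"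
    using \<beta> by (intro eventually_at_rightI[of _ "\<beta> / 4"]) auto
  with \<sigma> have "\<forall>\<^sub>F s in at_right 0.
      \<bar>2 * s * (\<integral>y. delta_m m u x y \<partial>nu_meas (\<sigma> s) s) - real ((2 * m) choose m) * u x\<bar> \<le> s * (2 * B)"
  proof eventually_elim
    case (elim s)
    then have "\<bar>(\<integral>y. delta_m m u x y \<partial>nu_meas (\<sigma> s) s) - real ((2 * m) choose m) * u x / (2 * s)\<bar> \<le> B"
      unfolding B_def using \<beta>(2) C m U \<rho> cont by (intro nu_integral_delta_m_near) auto
    moreover have "2 * s * (\<integral>y. delta_m m u x y \<partial>nu_meas (\<sigma> s) s) - real ((2 * m) choose m) * u x
        = 2 * s * ((\<integral>y. delta_m m u x y \<partial>nu_meas (\<sigma> s) s) - real ((2 * m) choose m) * u x / (2 * s))"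
      using elim by (simp add: field_simps)
    ultimately show ?case
      using elim by (simp add: abs_mult)
  qed
  then show ?thesis by (rule tendsto_at_right_0_linear_bound)
qed

lemma L_op_eq:
  fixes \<sigma> :: "'a::euclidean_space measure"
  assumes \<sigma>: "sphere_prob \<sigma>" and s: "0 < s" and m: "m \<ge> 1" and e: "norm e = 1"
  shows "L_op m s \<sigma> e u x = (2 * s * (\<integral>y. delta_m m u x y \<partial>nu_meas \<sigma> s))
            / (M_fun s \<sigma> e * (2 * s * (2 ^ m * enn2real (cos_power_integral m s))))"
proof -
  have "sets \<sigma> = sets borel" "sigma_finite_measure \<sigma>"
    using \<sigma> by (auto simp: sphere_prob_def prob_space_imp_sigma_finite)
  from nn_integral_nu_meas_cos_power[OF this m]
  have "(\<integral>\<^sup>+y. ennreal ((1 - cos (e \<bullet> y)) ^ m) \<partial>nu_meas \<sigma> s)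
      = ennreal (M_fun s \<sigma> e) * cos_power_integral m s"
    using nn_integral_M_fun(1)[OF \<sigma>] e s by simp
  moreover have "(\<lambda>y. (1 - cos (e \<bullet> y)) ^ m) \<in> borel_measurable (nu_meas \<sigma> s)"
    by (subst measurable_cong_sets[OF sets_nu_meas refl]) measurable
  ultimately have "(\<integral>y. (1 - cos (e \<bullet> y)) ^ m \<partial>nu_meas \<sigma> s) = M_fun s \<sigma> e * enn2real (cos_power_integral m s)"
    by (simp add: integral_eq_nn_integral enn2real_mult M_fun_nonneg)
  then show ?thesis
    using s by (simp add: L_op_def c_const_def field_simps)
qed

theorem proposition3p8:
  fixes m :: nat and \<sigma> :: "real \<Rightarrow> 'a::euclidean_space measure" and e :: "real \<Rightarrow> 'a"
    and \<beta> :: real and u :: "'a \<Rightarrow> real" and x :: 'a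
  assumes "m \<ge> 1"
    and "\<And>s. s \<in> {0<..<real m} \<Longrightarrow> sets (\<sigma> s) = sets borel \<and> prob_space (\<sigma> s)
                                    \<and> emeasure (\<sigma> s) (sphere 0 1) = 1"
    and "\<And>s. s \<in> {0<..<real m} \<Longrightarrow> e s \<in> sphere 0 1
           \<and> (\<forall>\<theta>\<in>sphere 0 1. M_fun s (\<sigma> s) \<theta> \<le> M_fun s (\<sigma> s) (e s))"
    and "0 < \<beta>" and "\<beta> < 1"
    and "\<exists>C. \<forall>y z. \<bar>u y - u z\<bar> \<le> C * norm (y - z) powr \<beta>"
    and "\<exists>K. compact K \<and> (\<forall>y. y \<notin> K \<longrightarrow> u y = 0)"
  shows "((\<lambda>s. L_op m s (\<sigma> s) (e s) u x) \<longlongrightarrow> u x) (at_right 0)"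
proof -
  have "\<forall>\<^sub>F s in at_right 0. s \<in> {0<..<real m}"
    using assms(1) by (intro eventually_at_rightI[of _ "real m"]) auto
  then have hyps: "\<forall>\<^sub>F s in at_right 0. 0 < s \<and> sphere_prob (\<sigma> s) \<and> e s \<in> sphere 0 1
                      \<and> (\<forall>\<theta>\<in>sphere 0 1. M_fun s (\<sigma> s) \<theta> \<le> M_fun s (\<sigma> s) (e s))"
    by eventually_elim (use assms(2,3) in \<open>auto simp: sphere_prob_def\<close>)
  define N where "N s = 2 * s * (\<integral>y. delta_m m u x y \<partial>nu_meas (\<sigma> s) s)" for s
  define D where "D s = M_fun s (\<sigma> s) (e s) * (2 * s * (2 ^ m * enn2real (cos_power_integral m s)))" for s
  have "(N \<longlongrightarrow> real ((2 * m) choose m) * u x) (at_right 0)"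
    unfolding N_def using hyps assms(1,4-7)
    by (intro tendsto_nu_integral_delta_m) (auto elim: eventually_mono)
  moreover have "(D \<longlongrightarrow> 1 * real ((2 * m) choose m)) (at_right 0)"
    unfolding D_def using hyps
    by (intro tendsto_mult tendsto_M_fun_max tendsto_cos_power_integral assms(1)) (auto elim: eventually_mono)
  ultimately have "((\<lambda>s. N s / D s) \<longlongrightarrow> real ((2 * m) choose m) * u x / (1 * real ((2 * m) choose m))) (at_right 0)"
    by (rule tendsto_divide) simp
  then have "((\<lambda>s. N s / D s) \<longlongrightarrow> u x) (at_right 0)"
    by simp
  moreover have "\<forall>\<^sub>F s in at_right 0. N s / D s = L_op m s (\<sigma> s) (e s) u x"
    using hyps unfolding N_def D_def by eventually_elim (metis L_op_eq assms(1) mem_sphere_0)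
  ultimately show ?thesis
    by (rule Lim_transform_eventually)
qed

end
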